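(* Every asymptotically uniformly smooth Banach space $X$ has the alternating Banach-Saks property. In particular, if $X$ is also reflexive, then $X$ has the Banach-Saks property.
   Context: The modulus of asymptotic uniform smoothness of $X$ is $\overline{\rho}_X(t)=\sup_{x\in\partial B_X}\inf_{\dim(X/E)<\infty}\sup_{h\in\partial B_E}\|x+th\|-1$ ($E$ closed finite-codimensional subspaces, $\partial B$ the unit sphere); $X$ is asymptotically uniformly smooth if $\lim_{t\to0^+}\overline\rho_X(t)/t=0$. $X$ has the Banach-Saks property if every bounded sequence $(x_n)$ has a subsequence $(x_{n_j})$ with $(\frac1k\sum_{j=1}^kx_{n_j})_k$ norm convergent; it has the alternating Banach-Saks property if every bounded sequence has a subsequence $(x_{n_j})$ and signs $\varepsilon_j\in\{-1,1\}$ with $(\frac1k\sum_{j=1}^k\varepsilon_jx_{n_j})_k$ norm convergent. *)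

theory Defs
  imports "HOL-Analysis.Analysis"
begin

definition fincodim_subspaces :: "'a::real_normed_vector set set" where
  "fincodim_subspaces =
     {E. subspace E \<and> closed E \<and> (\<exists>F. finite F \<and> span (E \<union> F) = UNIV)}"

text \<open>Modulus of asymptotic uniform smoothness, valued in the extended reals
  (so that suprema/infima are always defined).\<close>
definition aus_modulus :: "'a::real_normed_vector itself \<Rightarrow> real \<Rightarrow> ereal" where
  "aus_modulus _ t =
     (SUP x\<in>sphere (0::'a) 1. INF E\<in>(fincodim_subspaces :: 'a set set).
        SUP h\<in>sphere 0 1 \<inter> E. ereal (norm (x + t *\<^sub>R h) - 1))"

definition asymptotically_uniformly_smooth :: "'a::real_normed_vector itself \<Rightarrow> bool" where
  "asymptotically_uniformly_smooth X \<longleftrightarrow>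
     ((\<lambda>t. aus_modulus X t / ereal t) \<longlongrightarrow> 0) (at_right 0)"

definition banach_saks :: "'a::real_normed_vector itself \<Rightarrow> bool" where
  "banach_saks _ \<longleftrightarrow>
     (\<forall>x :: nat \<Rightarrow> 'a. bounded (range x) \<longrightarrow>
        (\<exists>r. strict_mono r \<and>
           convergent (\<lambda>k. (1 / real (Suc k)) *\<^sub>R (\<Sum>j\<le>k. x (r j)))))"

definition alternating_banach_saks :: "'a::real_normed_vector itself \<Rightarrow> bool" where
  "alternating_banach_saks _ \<longleftrightarrow>
     (\<forall>x :: nat \<Rightarrow> 'a. bounded (range x) \<longrightarrow>
        (\<exists>r \<epsilon>. strict_mono r \<and> (\<forall>j. \<epsilon> j \<in> {-1, 1::real}) \<and>
           convergent (\<lambda>k. (1 / real (Suc k)) *\<^sub>R (\<Sum>j\<le>k. \<epsilon> j *\<^sub>R x (r j)))))"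

definition reflexive_space :: "'a::real_normed_vector itself \<Rightarrow> bool" where
  "reflexive_space _ \<longleftrightarrow>
     (\<forall>\<phi> :: ('a \<Rightarrow>\<^sub>L real) \<Rightarrow>\<^sub>L real. \<exists>x::'a. \<forall>f. blinfun_apply \<phi> f = blinfun_apply f x)"

end

(*
  By Tychonoff's theorem the evaluations f |-> f (x n) have a cluster
  point \<phi> in the product topology on the dual, so the differences x a - x b with a < b both large
  (and, when reflexivity makes \<phi> the evaluation at some x0, the vectors x n - x0) are weakly close
  to 0.  Every closed subspace E of finite codimension admits a bounded finite-rank map P with
  y - P y \<in> E, so finitely many functionals control the distance to E, and such vectors come
  arbitrarily close to every E.

  Asymptotic uniform smoothness says that adding to x an element e of a suitable such E with
  norm e \<le> t(\<epsilon>) * norm x costs at most \<epsilon> * norm e in norm.  Choosing each new vector near the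
  subspace attached to the current partial sum, with \<epsilon> decreasing slowly enough, the partial
  sums grow like o(k), so their Cesaro means tend to 0.  Interleaving the chosen pairs with
  signs +1, -1 gives the alternating Banach-Saks property; the means of x n - x0 give the
  Banach-Saks property.
*)

theory Submission
  imports Defs "HOL-Real_Asymp.Real_Asymp"
begin

section \<open>Weak cluster points of bounded sequences\<close>

definition zero_in_weak_closure :: "'a::real_normed_vector set \<Rightarrow> bool" where
  "zero_in_weak_closure S \<longleftrightarrow>
     (\<forall>(F :: ('a \<Rightarrow>\<^sub>L real) set) \<eta>. finite F \<longrightarrow> \<eta> > 0 \<longrightarrow>
        (\<exists>y\<in>S. \<forall>f\<in>F. \<bar>blinfun_apply f y\<bar> < \<eta>))"

definition weak_cluster_point :: "(nat \<Rightarrow> 'a::real_normed_vector) \<Rightarrow> (('a \<Rightarrow>\<^sub>L real) \<Rightarrow> real) \<Rightarrow> bool" where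
  "weak_cluster_point x \<phi> \<longleftrightarrow>
     (\<forall>F \<eta>. finite F \<longrightarrow> \<eta> > 0 \<longrightarrow>
        frequently (\<lambda>n. \<forall>f\<in>F. \<bar>blinfun_apply f (x n) - \<phi> f\<bar> < \<eta>) sequentially)"

lemma compact_functional_box:
  "compact (PiE UNIV (\<lambda>f::'a::real_normed_vector \<Rightarrow>\<^sub>L real. cball (0::real) (norm f * M)))"
proof -
  have "compactin (product_topology (\<lambda>_. euclidean) UNIV)
          (PiE UNIV (\<lambda>f::'a \<Rightarrow>\<^sub>L real. cball (0::real) (norm f * M)))"
    by (simp add: compactin_PiE)
  then show ?thesis
    by (simp add: euclidean_product_topology compactin_euclidean_iff)
qed

lemma bounded_sequence_weak_cluster_point:
  fixes x :: "nat \<Rightarrow> 'a::real_normed_vector"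
  assumes x: "\<And>n. norm (x n) \<le> M"
  obtains \<phi> :: "('a \<Rightarrow>\<^sub>L real) \<Rightarrow> real"
  where "\<And>f. \<bar>\<phi> f\<bar> \<le> norm f * M" and "weak_cluster_point x \<phi>"
proof -
  define \<psi> :: "nat \<Rightarrow> ('a \<Rightarrow>\<^sub>L real) \<Rightarrow> real" where "\<psi> n = (\<lambda>f. blinfun_apply f (x n))" for n
  let ?K = "PiE UNIV (\<lambda>f::'a \<Rightarrow>\<^sub>L real. cball (0::real) (norm f * M))"
  have "\<bar>blinfun_apply f (x n)\<bar> \<le> norm f * M" for f n
    using norm_blinfun[of f "x n"] mult_left_mono[OF x[of n] norm_ge_zero[of f]] by simp
  then have "eventually (\<lambda>\<phi>. \<phi> \<in> ?K) (filtermap \<psi> sequentially)"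
    by (simp add: eventually_filtermap \<psi>_def PiE_iff)
  moreover have "filtermap \<psi> sequentially \<noteq> bot"
    by (simp add: filtermap_bot_iff)
  ultimately obtain \<phi> where "\<phi> \<in> ?K" and cluster: "inf (nhds \<phi>) (filtermap \<psi> sequentially) \<noteq> bot"
    using compact_functional_box[unfolded compact_filter] by blast
  show thesis
  proof
    show "\<bar>\<phi> f\<bar> \<le> norm f * M" for f
      using \<open>\<phi> \<in> ?K\<close> by (simp add: PiE_iff)
  next
    show "weak_cluster_point x \<phi>"
      unfolding weak_cluster_point_def
    proof (intro allI impI)
      fix F :: "('a \<Rightarrow>\<^sub>L real) set" and \<eta> :: real
      assume "finite F" "\<eta> > 0"
      let ?V = "{\<phi>'. \<forall>f\<in>F. \<phi>' f \<in> ball (\<phi> f) \<eta>}"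
      have "eventually (\<lambda>\<phi>'. \<phi>' \<in> ?V) (nhds \<phi>)"
        using \<open>finite F\<close> \<open>\<eta> > 0\<close> by (intro eventually_nhds_in_open product_topology_basis') auto
      show "frequently (\<lambda>n. \<forall>f\<in>F. \<bar>blinfun_apply f (x n) - \<phi> f\<bar> < \<eta>) sequentially"
      proof (rule ccontr)
        assume "\<not> ?thesis"
        then have "eventually (\<lambda>\<phi>'. \<phi>' \<notin> ?V) (filtermap \<psi> sequentially)"
          by (simp add: not_frequently eventually_filtermap \<psi>_def dist_real_def abs_minus_commute)
        with \<open>eventually (\<lambda>\<phi>'. \<phi>' \<in> ?V) (nhds \<phi>)\<close>
        have "eventually (\<lambda>_. False) (inf (nhds \<phi>) (filtermap \<psi> sequentially))"
          by (auto simp: eventually_inf)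
        with cluster show False
          by (simp add: trivial_limit_def)
      qed
    qed
  qed
qed

lemma weak_cluster_point_bounded_linear:
  fixes x :: "nat \<Rightarrow> 'a::real_normed_vector"
  assumes bound: "\<And>f. \<bar>\<phi> f\<bar> \<le> norm f * M" and cluster: "weak_cluster_point x \<phi>"
  shows "bounded_linear \<phi>"
proof -
  have near: "\<exists>n. \<forall>f\<in>F. \<bar>blinfun_apply f (x n) - \<phi> f\<bar> < \<eta>" if "finite F" "\<eta> > 0" for F \<eta>
    using cluster that unfolding weak_cluster_point_def by (blast dest: frequently_ex)
  have small_zero: "d = 0" if small: "\<And>\<eta>. \<eta> > 0 \<Longrightarrow> \<bar>d\<bar> < C * \<eta>" and "C > 0" for d C :: real
  proof -
    have "\<bar>d\<bar> \<le> 0"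
    proof (rule field_le_epsilon)
      show "\<bar>d\<bar> \<le> 0 + e" if "e > 0" for e
        using small[of "e / C"] \<open>C > 0\<close> \<open>e > 0\<close> by simp
    qed
    then show ?thesis by simp
  qed
  have "\<bar>\<phi> (f + g) - (\<phi> f + \<phi> g)\<bar> < 3 * \<eta>" if "\<eta> > 0" for f g \<eta>
  proof -
    obtain n where "\<forall>h\<in>{f, g, f + g}. \<bar>blinfun_apply h (x n) - \<phi> h\<bar> < \<eta>"
      using near[of "{f, g, f + g}" \<eta>] \<open>\<eta> > 0\<close> by auto
    then show ?thesis
      by (simp add: plus_blinfun.rep_eq abs_less_iff)
  qed
  then have add: "\<phi> (f + g) = \<phi> f + \<phi> g" for f g
    using small_zero[of "\<phi> (f + g) - (\<phi> f + \<phi> g)" 3] by simp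
  have "\<bar>\<phi> (c *\<^sub>R f) - c * \<phi> f\<bar> < (1 + \<bar>c\<bar>) * \<eta>" if "\<eta> > 0" for c f \<eta>
  proof -
    obtain n where n: "\<forall>h\<in>{f, c *\<^sub>R f}. \<bar>blinfun_apply h (x n) - \<phi> h\<bar> < \<eta>"
      using near[of "{f, c *\<^sub>R f}" \<eta>] \<open>\<eta> > 0\<close> by auto
    have "\<bar>c * (blinfun_apply f (x n) - \<phi> f)\<bar> \<le> \<bar>c\<bar> * \<eta>"
      using n by (simp add: abs_mult mult_left_mono less_imp_le)
    with n show ?thesis
      by (simp add: scaleR_blinfun.rep_eq abs_less_iff abs_le_iff algebra_simps)
  qed
  then have scale: "\<phi> (c *\<^sub>R f) = c *\<^sub>R \<phi> f" for c f
    using small_zero[of "\<phi> (c *\<^sub>R f) - c * \<phi> f" "1 + \<bar>c\<bar>"] by simp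
  show ?thesis
    by (rule bounded_linear_intro[OF add scale, of M]) (metis bound mult.commute real_norm_def)
qed

section \<open>Closed subspaces of finite codimension\<close>

definition finite_rank_sum :: "(('a::real_normed_vector \<Rightarrow>\<^sub>L real) \<times> 'a) list \<Rightarrow> 'a \<Rightarrow> 'a" where
  "finite_rank_sum L y = (\<Sum>p\<leftarrow>L. blinfun_apply (fst p) y *\<^sub>R snd p)"

lemma finite_rank_sum_Nil [simp]: "finite_rank_sum [] y = 0"
  by (simp add: finite_rank_sum_def)

lemma finite_rank_sum_Cons [simp]:
  "finite_rank_sum (p # L) y = blinfun_apply (fst p) y *\<^sub>R snd p + finite_rank_sum L y"
  by (simp add: finite_rank_sum_def)

lemma bounded_linear_finite_rank_sum: "bounded_linear (finite_rank_sum L)"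
proof (induction L)
  case Nil
  show ?case by (simp add: finite_rank_sum_def bounded_linear_zero)
next
  case (Cons p L)
  have "bounded_linear (\<lambda>y. blinfun_apply (fst p) y *\<^sub>R snd p)"
    by (intro bounded_linear_compose[OF bounded_linear_scaleR_left] blinfun.bounded_linear_right)
  with Cons show ?case
    by (simp add: bounded_linear_add)
qed

lemma norm_finite_rank_sum_le:
  assumes "\<And>p. p \<in> set L \<Longrightarrow> \<bar>blinfun_apply (fst p) y\<bar> \<le> \<eta>"
  shows "norm (finite_rank_sum L y) \<le> \<eta> * (\<Sum>p\<leftarrow>L. norm (snd p))"
  using assms
proof (induction L)
  case (Cons p L)
  have "norm (finite_rank_sum (p # L) y) \<le> \<bar>blinfun_apply (fst p) y\<bar> * norm (snd p) + norm (finite_rank_sum L y)"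
    using norm_triangle_ineq[of "blinfun_apply (fst p) y *\<^sub>R snd p"] by simp
  also have "\<dots> \<le> \<eta> * norm (snd p) + \<eta> * (\<Sum>p\<leftarrow>L. norm (snd p))"
    using Cons by (intro add_mono mult_right_mono) auto
  finally show ?case
    by (simp add: distrib_left)
qed simp

lemma infdist_closed_subspace_pos:
  fixes E :: "'a::real_normed_vector set"
  assumes "subspace E" "closed E" "v \<notin> E"
  shows "infdist v E > 0"
  using infdist_pos_not_in_closed[OF assms(2) _ assms(3)] subspace_0[OF assms(1)] by auto

lemma abs_coeff_mult_infdist_le:
  fixes E :: "'a::real_normed_vector set"
  assumes "subspace E" "z - c *\<^sub>R v \<in> E"
  shows "\<bar>c\<bar> * infdist v E \<le> norm z"
proof (cases "c = 0")
  case False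
  have "(- 1 / c) *\<^sub>R (z - c *\<^sub>R v) \<in> E"
    using assms by (simp add: subspace_scale subspace_neg)
  then have "infdist v E \<le> dist v ((- 1 / c) *\<^sub>R (z - c *\<^sub>R v))"
    by (rule infdist_le)
  also have "\<dots> = norm (v - (- 1 / c) *\<^sub>R (z - c *\<^sub>R v))"
    by (simp add: dist_norm)
  also have "v - (- 1 / c) *\<^sub>R (z - c *\<^sub>R v) = (1 / c) *\<^sub>R z"
    using False by (simp add: algebra_simps)
  finally show ?thesis
    using False by (simp add: field_simps)
qed simp

lemma subspace_add_line:
  fixes E :: "'a::real_normed_vector set"
  assumes "subspace E"
  shows "subspace {z. \<exists>c. z - c *\<^sub>R v \<in> E}"
  unfolding subspace_def
proof (intro conjI ballI allI)
  show "0 \<in> {z. \<exists>c. z - c *\<^sub>R v \<in> E}"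
    using assms by (auto intro!: exI[of _ 0] simp: subspace_0)
  fix x y r assume "x \<in> {z. \<exists>c. z - c *\<^sub>R v \<in> E}" "y \<in> {z. \<exists>c. z - c *\<^sub>R v \<in> E}"
  then obtain a b where "x - a *\<^sub>R v \<in> E" "y - b *\<^sub>R v \<in> E" by auto
  then have "(x - a *\<^sub>R v) + (y - b *\<^sub>R v) \<in> E" "r *\<^sub>R (x - a *\<^sub>R v) \<in> E"
    using assms by (simp_all add: subspace_add subspace_scale)
  then have "(x + y) - (a + b) *\<^sub>R v \<in> E" "r *\<^sub>R x - (r * a) *\<^sub>R v \<in> E"
    by (simp_all add: algebra_simps)
  then show "x + y \<in> {z. \<exists>c. z - c *\<^sub>R v \<in> E}" "r *\<^sub>R x \<in> {z. \<exists>c. z - c *\<^sub>R v \<in> E}"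
    by blast+
qed

lemma closed_add_line:
  fixes E :: "'a::real_normed_vector set"
  assumes E: "subspace E" "closed E" and v: "v \<notin> E"
  shows "closed {z. \<exists>c. z - c *\<^sub>R v \<in> E}"
  unfolding closed_sequential_limits
proof (intro allI impI, elim conjE)
  fix z l assume "\<forall>n. z n \<in> {z. \<exists>c. z - c *\<^sub>R v \<in> E}" and lim: "z \<longlonglongrightarrow> l"
  then obtain c where c: "\<And>n. z n - c n *\<^sub>R v \<in> E"
    using choice[of "\<lambda>n c. z n - c *\<^sub>R v \<in> E"] by auto
  have d: "infdist v E > 0"
    using infdist_closed_subspace_pos[OF E v] .
  have coeff_dist: "dist (c m) (c n) * infdist v E \<le> dist (z m) (z n)" for m n
  proof -
    have "(z m - z n) - (c m - c n) *\<^sub>R v \<in> E"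
      using subspace_diff[OF E(1) c c] by (simp add: algebra_simps)
    from abs_coeff_mult_infdist_le[OF E(1) this] show ?thesis
      by (simp add: dist_norm dist_real_def)
  qed
  have "Cauchy c"
  proof (rule metric_CauchyI)
    fix e :: real assume "e > 0"
    then obtain M where M: "\<And>m n. M \<le> m \<Longrightarrow> M \<le> n \<Longrightarrow> dist (z m) (z n) < e * infdist v E"
      using metric_CauchyD[OF LIMSEQ_imp_Cauchy[OF lim], of "e * infdist v E"] d by auto
    have "dist (c m) (c n) < e" if "M \<le> m" "M \<le> n" for m n
      using coeff_dist[of m n] M[OF that] d by (meson le_less_trans mult_less_cancel_right_pos)
    then show "\<exists>M. \<forall>m\<ge>M. \<forall>n\<ge>M. dist (c m) (c n) < e" by blast
  qed
  then obtain c0 where "c \<longlonglongrightarrow> c0"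
    using Cauchy_convergent convergent_def by blast
  with lim have "(\<lambda>n. z n - c n *\<^sub>R v) \<longlonglongrightarrow> l - c0 *\<^sub>R v"
    by (intro tendsto_intros)
  then have "l - c0 *\<^sub>R v \<in> E"
    by (rule closed_sequentially[OF E(2) c])
  then show "l \<in> {z. \<exists>c. z - c *\<^sub>R v \<in> E}" by blast
qed

lemma coordinate_functionalE:
  fixes E :: "'a::real_normed_vector set"
  assumes E: "subspace E" "closed E" and v: "v \<notin> E"
    and p: "bounded_linear p" and decomp: "\<And>y. \<exists>c. p y - c *\<^sub>R v \<in> E"
  obtains h where "bounded_linear h" and "\<And>y. p y - h y *\<^sub>R v \<in> E"
proof
  have d: "infdist v E > 0"
    using infdist_closed_subspace_pos[OF E v] .
  have unique: "c = c'" if "z - c *\<^sub>R v \<in> E" "z - c' *\<^sub>R v \<in> E" for z c c'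
  proof -
    have "(z - c *\<^sub>R v) - (z - c' *\<^sub>R v) \<in> E"
      by (rule subspace_diff[OF E(1) that])
    then have "0 - (c - c') *\<^sub>R v \<in> E"
      by (simp add: algebra_simps)
    from abs_coeff_mult_infdist_le[OF E(1) this] d show ?thesis
      by (simp add: mult_le_0_iff)
  qed
  define h where "h y = (THE c. p y - c *\<^sub>R v \<in> E)" for y
  show h: "p y - h y *\<^sub>R v \<in> E" for y
    using decomp[of y] unique unfolding h_def by (metis theI)
  then have h_eqI: "h y = c" if "p y - c *\<^sub>R v \<in> E" for y c
    using unique that by blast
  obtain K where K: "\<And>y. norm (p y) \<le> norm y * K"
    using bounded_linear.bounded[OF p] by blast
  show "bounded_linear h"
  proof (rule bounded_linear_intro)
    show "h (a + b) = h a + h b" for a b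
    proof (rule h_eqI)
      have "(p a - h a *\<^sub>R v) + (p b - h b *\<^sub>R v) \<in> E"
        using h E(1) by (simp add: subspace_add)
      then show "p (a + b) - (h a + h b) *\<^sub>R v \<in> E"
        by (simp add: linear_add[OF bounded_linear.linear[OF p]] algebra_simps)
    qed
    show "h (r *\<^sub>R a) = r *\<^sub>R h a" for r a
    proof (simp, rule h_eqI)
      have "r *\<^sub>R (p a - h a *\<^sub>R v) \<in> E"
        using h E(1) by (simp add: subspace_scale)
      then show "p (r *\<^sub>R a) - (r * h a) *\<^sub>R v \<in> E"
        by (simp add: linear_scale[OF bounded_linear.linear[OF p]] algebra_simps)
    qed
    show "norm (h y) \<le> norm y * (K / infdist v E)" for y
      using abs_coeff_mult_infdist_le[OF E(1) h[of y]] K[of y] d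
      by (simp add: field_simps)
  qed
qed

lemma closed_subspace_finite_rank_complement:
  fixes E :: "'a::real_normed_vector set"
  assumes "finite F" "subspace E" "closed E" "span (E \<union> F) = UNIV"
  obtains L where "\<And>y. y - finite_rank_sum L y \<in> E"
  using assms
proof (induction F arbitrary: E thesis rule: finite_induct)
  case empty
  then have "E = UNIV"
    by (metis Un_empty_right span_eq_iff)
  then show ?case
    using empty(1)[of "[]"] by simp
next
  case (insert v F E)
  show ?case
  proof (cases "v \<in> E")
    case True
    then have "E \<union> insert v F = E \<union> F" by auto
    then show ?thesis
      using insert.IH[of E thesis] insert.prems by (simp, blast)
  next
    case False
    let ?E1 = "{z. \<exists>c. z - c *\<^sub>R v \<in> E}"
    have "E \<union> insert v F \<subseteq> ?E1 \<union> F"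
    proof
      fix z assume "z \<in> E \<union> insert v F"
      moreover have "z - 0 *\<^sub>R v \<in> E" if "z \<in> E" using that by simp
      moreover have "v - 1 *\<^sub>R v \<in> E" using subspace_0[OF insert.prems(2)] by simp
      ultimately show "z \<in> ?E1 \<union> F" by blast
    qed
    then have "span (E \<union> insert v F) \<subseteq> span (?E1 \<union> F)"
      by (rule span_mono)
    then have "span (?E1 \<union> F) = UNIV"
      using insert.prems(4) by auto
    then obtain L1 where L1: "\<And>y. y - finite_rank_sum L1 y \<in> ?E1"
      using insert.IH[OF _ subspace_add_line[OF insert.prems(2)]
          closed_add_line[OF insert.prems(2,3) False]] by blast
    have "bounded_linear (\<lambda>y. y - finite_rank_sum L1 y)"
      by (intro bounded_linear_sub bounded_linear_ident bounded_linear_finite_rank_sum)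
    then obtain h where h: "bounded_linear h" "\<And>y. y - finite_rank_sum L1 y - h y *\<^sub>R v \<in> E"
      using coordinate_functionalE[OF insert.prems(2,3) False] L1 by blast
    show ?thesis
    proof (rule insert.prems(1))
      show "y - finite_rank_sum ((Blinfun h, v) # L1) y \<in> E" for y
        using h(2)[of y] by (simp add: bounded_linear_Blinfun_apply[OF h(1)] algebra_simps)
    qed
  qed
qed

lemma fincodim_subspace_dist_le_functionals:
  assumes "E \<in> fincodim_subspaces"
  obtains F :: "('a::real_normed_vector \<Rightarrow>\<^sub>L real) set" and C
  where "finite F" "C \<ge> 0"
    and "\<And>y \<eta>. (\<And>f. f \<in> F \<Longrightarrow> \<bar>blinfun_apply f y\<bar> \<le> \<eta>) \<Longrightarrow> \<exists>e\<in>E. norm (y - e) \<le> C * \<eta>"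
proof -
  obtain L where L: "\<And>y. y - finite_rank_sum L y \<in> E"
    using assms closed_subspace_finite_rank_complement
    unfolding fincodim_subspaces_def by blast
  show thesis
  proof
    show "finite (fst ` set L)"
      by simp
    show "0 \<le> (\<Sum>p\<leftarrow>L. norm (snd p))"
      by (induction L) auto
    show "\<exists>e\<in>E. norm (y - e) \<le> (\<Sum>p\<leftarrow>L. norm (snd p)) * \<eta>"
      if "\<And>f. f \<in> fst ` set L \<Longrightarrow> \<bar>blinfun_apply f y\<bar> \<le> \<eta>" for y \<eta>
      using L[of y] norm_finite_rank_sum_le[of L y \<eta>] that
      by (intro bexI[of _ "y - finite_rank_sum L y"]) (auto simp: mult.commute)
  qed
qed

lemma zero_in_weak_closure_near_fincodim:
  assumes "zero_in_weak_closure S" "E \<in> fincodim_subspaces" "\<delta> > 0"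
  shows "\<exists>y\<in>S. \<exists>e\<in>E. norm (y - e) < \<delta>"
proof -
  obtain F C where F: "finite F" "C \<ge> 0"
    and approx: "\<And>y \<eta>. (\<And>f. f \<in> F \<Longrightarrow> \<bar>blinfun_apply f y\<bar> \<le> \<eta>) \<Longrightarrow> \<exists>e\<in>E. norm (y - e) \<le> C * \<eta>"
    using fincodim_subspace_dist_le_functionals[OF assms(2)] by blast
  define \<eta> where "\<eta> = \<delta> / (C + 1)"
  have "\<eta> > 0" "C * \<eta> < \<delta>"
    using F(2) \<open>\<delta> > 0\<close> by (simp_all add: \<eta>_def field_simps)
  then obtain y where "y \<in> S" "\<And>f. f \<in> F \<Longrightarrow> \<bar>blinfun_apply f y\<bar> \<le> \<eta>"
    using assms(1) F(1) unfolding zero_in_weak_closure_def by (meson less_imp_le)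
  with approx \<open>C * \<eta> < \<delta>\<close> show ?thesis
    by (meson le_less_trans)
qed

section \<open>Asymptotic uniform smoothness\<close>

definition smooth_at_scale :: "'a::real_normed_vector itself \<Rightarrow> real \<Rightarrow> real \<Rightarrow> bool" where
  "smooth_at_scale _ \<epsilon> t \<longleftrightarrow>
     (\<forall>x::'a. \<exists>E\<in>fincodim_subspaces. \<forall>e\<in>E.
        norm e \<le> t * norm x \<longrightarrow> norm (x + e) \<le> norm x + \<epsilon> * norm e)"

lemma aus_modulus_less_linearE:
  assumes "asymptotically_uniformly_smooth TYPE('a::real_normed_vector)" "\<epsilon> > 0"
  obtains t where "t > 0" "aus_modulus TYPE('a) t < ereal (\<epsilon> * t)"
proof -
  have "eventually (\<lambda>t. aus_modulus TYPE('a) t / ereal t < ereal \<epsilon>) (at_right 0)"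
    using assms order_tendstoD(2)[of _ 0 _ "ereal \<epsilon>"]
    unfolding asymptotically_uniformly_smooth_def by (simp add: zero_ereal_def)
  moreover have "eventually (\<lambda>t. 0 < t) (at_right (0::real))"
    by (rule eventually_at_right_less)
  ultimately obtain t where t: "0 < t" "aus_modulus TYPE('a) t / ereal t < ereal \<epsilon>"
    using eventually_happens'[OF trivial_limit_at_right_real eventually_conj] by blast
  have "aus_modulus TYPE('a) t < ereal (\<epsilon> * t)"
    using t by (cases "aus_modulus TYPE('a) t") (auto simp: field_simps)
  with t(1) show thesis
    by (rule that)
qed

lemma aus_modulus_lessE:
  fixes u :: "'a::real_normed_vector"
  assumes "aus_modulus TYPE('a) t < ereal r" and "norm u = 1"
  obtains E :: "'a set"
  where "E \<in> fincodim_subspaces" "\<And>h. h \<in> E \<Longrightarrow> norm h = 1 \<Longrightarrow> norm (u + t *\<^sub>R h) \<le> 1 + r"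
proof -
  have "(INF E\<in>fincodim_subspaces. SUP h\<in>sphere 0 1 \<inter> E. ereal (norm (u + t *\<^sub>R h) - 1))
          \<le> aus_modulus TYPE('a) t"
    unfolding aus_modulus_def using assms(2) by (intro SUP_upper) simp
  also note assms(1)
  finally obtain E where E: "E \<in> fincodim_subspaces"
    and less: "(SUP h\<in>sphere 0 1 \<inter> E. ereal (norm (u + t *\<^sub>R h) - 1)) < ereal r"
    by (auto simp: INF_less_iff)
  have "norm (u + t *\<^sub>R h) \<le> 1 + r" if "h \<in> E" "norm h = 1" for h
  proof -
    have "ereal (norm (u + t *\<^sub>R h) - 1) \<le> (SUP h\<in>sphere 0 1 \<inter> E. ereal (norm (u + t *\<^sub>R h) - 1))"
      using that by (intro SUP_upper) simp
    also note less
    finally show ?thesis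
      by simp
  qed
  with E show thesis ..
qed

lemma norm_add_scaleR_le_convex:
  fixes u h :: "'a::real_normed_vector"
  assumes "0 \<le> s" "s \<le> t"
  shows "norm (u + s *\<^sub>R h) \<le> (1 - s / t) * norm u + s / t * norm (u + t *\<^sub>R h)"
proof (cases "t = 0")
  case False
  with assms have "0 < t"
    by simp
  then have "0 \<le> s / t" "0 \<le> 1 - s / t"
    using assms by (simp_all add: field_simps)
  have "u + s *\<^sub>R h = (1 - s / t) *\<^sub>R u + (s / t) *\<^sub>R (u + t *\<^sub>R h)"
    using False by (simp add: algebra_simps)
  also have "norm \<dots> \<le> norm ((1 - s / t) *\<^sub>R u) + norm ((s / t) *\<^sub>R (u + t *\<^sub>R h))"
    by (rule norm_triangle_ineq)
  also have "\<dots> = (1 - s / t) * norm u + s / t * norm (u + t *\<^sub>R h)"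
    using \<open>0 \<le> 1 - s / t\<close> \<open>0 < t\<close> assms(1) by simp
  finally show ?thesis .
qed (use assms in simp)

lemma norm_add_le_of_unit_modulus:
  fixes x :: "'a::real_normed_vector"
  assumes unit: "\<And>h. h \<in> E \<Longrightarrow> norm h = 1 \<Longrightarrow> norm (x /\<^sub>R norm x + t *\<^sub>R h) \<le> 1 + \<epsilon> * t"
    and "subspace E" "t > 0" "e \<in> E" "norm e \<le> t * norm x"
  shows "norm (x + e) \<le> norm x + \<epsilon> * norm e"
proof (cases "x = 0 \<or> e = 0")
  case False
  define u where "u = x /\<^sub>R norm x"
  define s where "s = norm e / norm x"
  define h where "h = e /\<^sub>R norm e"
  have "h \<in> E" "norm h = 1"
    using assms(2,4) False by (simp_all add: h_def subspace_scale)
  have s: "0 \<le> s" "s \<le> t"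
    using False assms(5) by (simp_all add: s_def pos_divide_le_eq mult.commute)
  have "norm (u + s *\<^sub>R h) \<le> (1 - s / t) * norm u + s / t * norm (u + t *\<^sub>R h)"
    by (rule norm_add_scaleR_le_convex[OF s])
  also have "\<dots> \<le> (1 - s / t) + s / t * (1 + \<epsilon> * t)"
    using mult_left_mono[OF unit[OF \<open>h \<in> E\<close> \<open>norm h = 1\<close>], of "s / t"] False s \<open>t > 0\<close>
    by (simp add: u_def)
  also have "\<dots> = 1 + \<epsilon> * s"
    using \<open>t > 0\<close> by (simp add: field_simps)
  finally have "norm x * norm (u + s *\<^sub>R h) \<le> norm x * (1 + \<epsilon> * s)"
    by (simp add: mult_left_mono)
  moreover have "x + e = norm x *\<^sub>R (u + s *\<^sub>R h)"
    using False by (simp add: s_def h_def u_def scaleR_add_right)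
  then have "norm (x + e) = norm x * norm (u + s *\<^sub>R h)"
    by simp
  moreover have "norm x * (1 + \<epsilon> * s) = norm x + \<epsilon> * norm e"
    using False by (simp add: s_def field_simps)
  ultimately show ?thesis
    by simp
qed (use assms(5) in auto)

lemma aus_imp_smooth_at_scale:
  assumes "asymptotically_uniformly_smooth TYPE('a::real_normed_vector)" "\<epsilon> > 0"
  shows "\<exists>t>0. smooth_at_scale TYPE('a) \<epsilon> t"
proof -
  obtain t where t: "t > 0" "aus_modulus TYPE('a) t < ereal (\<epsilon> * t)"
    using aus_modulus_less_linearE[OF assms] .
  have "\<exists>E\<in>fincodim_subspaces. \<forall>e\<in>E.
          norm e \<le> t * norm x \<longrightarrow> norm (x + e) \<le> norm x + \<epsilon> * norm e" for x :: 'a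
  proof (cases "x = 0")
    case True
    have "(UNIV :: 'a set) \<in> fincodim_subspaces"
      unfolding fincodim_subspaces_def by (auto intro!: exI[of _ "{}"])
    with True show ?thesis
      by auto
  next
    case False
    then obtain E where E: "E \<in> fincodim_subspaces"
      and "\<And>h. h \<in> E \<Longrightarrow> norm h = 1 \<Longrightarrow> norm (x /\<^sub>R norm x + t *\<^sub>R h) \<le> 1 + \<epsilon> * t"
      using aus_modulus_lessE[OF t(2), of "x /\<^sub>R norm x"] by auto
    with t(1) show ?thesis
      by (intro bexI[OF _ E] ballI impI norm_add_le_of_unit_modulus)
        (auto simp: fincodim_subspaces_def)
  qed
  with t(1) show ?thesis
    unfolding smooth_at_scale_def by blast
qed

lemma aus_smooth_scale_function:
  assumes "asymptotically_uniformly_smooth TYPE('a::real_normed_vector)"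
  obtains t where "\<And>\<epsilon>. \<epsilon> > 0 \<Longrightarrow> t \<epsilon> > 0" and "\<And>\<epsilon>. \<epsilon> > 0 \<Longrightarrow> smooth_at_scale TYPE('a) \<epsilon> (t \<epsilon>)"
proof -
  have "\<forall>\<epsilon>. \<exists>t. \<epsilon> > 0 \<longrightarrow> t > 0 \<and> smooth_at_scale TYPE('a) \<epsilon> t"
    using aus_imp_smooth_at_scale[OF assms] by blast
  from choice[OF this] obtain t where "\<forall>\<epsilon>. \<epsilon> > 0 \<longrightarrow> t \<epsilon> > 0 \<and> smooth_at_scale TYPE('a) \<epsilon> (t \<epsilon>)"
    by blast
  with that show thesis
    by blast
qed

section \<open>Greedy selection with null Cesaro means\<close>

lemma greedy_step:
  fixes S :: "'a::real_normed_vector set"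
  assumes "t > 0" "\<epsilon> \<ge> 0"
    and smooth: "smooth_at_scale TYPE('a) \<epsilon> t"
    and S: "zero_in_weak_closure S" "\<And>y. y \<in> S \<Longrightarrow> norm y \<le> B"
    and "0 < \<eta>" "\<eta> \<le> 1"
  shows "\<exists>y\<in>S. norm (x + y) \<le> max (norm x + \<epsilon> * (B + 1) + \<eta>) ((B + 1) / t + B)"
proof -
  obtain E where E: "E \<in> fincodim_subspaces"
    and smooth_x: "\<And>e. e \<in> E \<Longrightarrow> norm e \<le> t * norm x \<Longrightarrow> norm (x + e) \<le> norm x + \<epsilon> * norm e"
    using smooth unfolding smooth_at_scale_def by blast
  obtain y e where "y \<in> S" "e \<in> E" and ye: "norm (y - e) < \<eta>"
    using zero_in_weak_closure_near_fincodim[OF S(1) E \<open>0 < \<eta>\<close>] by blast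
  have "norm e \<le> B + 1"
    using norm_triangle_ineq3[of y e] S(2)[OF \<open>y \<in> S\<close>] ye \<open>\<eta> \<le> 1\<close> by linarith
  have "norm (x + y) \<le> max (norm x + \<epsilon> * (B + 1) + \<eta>) ((B + 1) / t + B)"
  proof (cases "norm e \<le> t * norm x")
    case True
    have "norm (x + y) \<le> norm (x + e) + norm (y - e)"
      using norm_triangle_ineq[of "x + e" "y - e"] by simp
    also have "\<dots> \<le> norm x + \<epsilon> * (B + 1) + \<eta>"
      using smooth_x[OF \<open>e \<in> E\<close> True] mult_left_mono[OF \<open>norm e \<le> B + 1\<close> \<open>\<epsilon> \<ge> 0\<close>] ye
      by linarith
    finally show ?thesis
      by simp
  next
    case False
    then have "norm x < (B + 1) / t"
      using \<open>norm e \<le> B + 1\<close> \<open>t > 0\<close> by (simp add: field_simps)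
    then have "norm (x + y) \<le> (B + 1) / t + B"
      using norm_triangle_ineq[of x y] S(2)[OF \<open>y \<in> S\<close>] by linarith
    then show ?thesis
      by simp
  qed
  with \<open>y \<in> S\<close> show ?thesis ..
qed

lemma slowly_divergent_index:
  fixes D g :: "nat \<Rightarrow> real"
  assumes "filterlim g at_top sequentially"
  obtains m :: "nat \<Rightarrow> nat"
  where "filterlim m at_top sequentially" "\<And>k. D (m k) \<le> max (D 0) (g k)"
proof
  define m where "m k = Max (insert 0 {j. j \<le> k \<and> D j \<le> g k})" for k
  have finite: "finite (insert 0 {j. j \<le> k \<and> D j \<le> g k})" for k
    by simp
  show "D (m k) \<le> max (D 0) (g k)" for k
    using Max_in[OF finite, of k] unfolding m_def by auto
  show "filterlim m at_top sequentially"
    unfolding filterlim_at_top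
  proof
    fix j
    have "eventually (\<lambda>k. D j \<le> g k) sequentially"
      using assms by (simp add: filterlim_at_top)
    moreover have "eventually (\<lambda>k. j \<le> k) sequentially"
      by (rule eventually_ge_at_top)
    ultimately show "eventually (\<lambda>k. j \<le> m k) sequentially"
      by eventually_elim (auto simp: m_def intro!: Max_ge[OF finite])
  qed
qed

lemma recursive_growth_bound:
  fixes a c g :: "nat \<Rightarrow> real"
  assumes "a 0 \<le> g 0" "incseq g" "\<And>k. c k \<ge> 0"
    and step: "\<And>k. a (Suc k) \<le> max (a k + c k) (g k)"
  shows "a k \<le> g k + (\<Sum>j<k. c j)"
proof (induction k)
  case 0
  show ?case using assms(1) by simp
next
  case (Suc k)
  have "g k \<le> g (Suc k)" "0 \<le> (\<Sum>j<k. c j)"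
    using assms(2,3) by (simp_all add: incseq_SucD sum_nonneg)
  with Suc step[of k] assms(3)[of k] show ?case
    by (simp add: max_def split: if_splits)
qed

lemma cesaro_mean_tendsto_zero:
  fixes c :: "nat \<Rightarrow> real"
  assumes "c \<longlonglongrightarrow> 0"
  shows "(\<lambda>n. (\<Sum>j<n. c j) / real n) \<longlonglongrightarrow> 0"
proof (rule LIMSEQ_I)
  fix r :: real assume "r > 0"
  then obtain N where N: "\<And>j. j \<ge> N \<Longrightarrow> \<bar>c j\<bar> < r / 2"
    using LIMSEQ_D[OF assms, of "r / 2"] by auto
  define C where "C = (\<Sum>j<N. \<bar>c j\<bar>)"
  have sum_le: "\<bar>\<Sum>j<n. c j\<bar> \<le> C + r * real n / 2" for n
  proof -
    have "\<bar>\<Sum>j<n. c j\<bar> \<le> (\<Sum>j<n. (if j < N then \<bar>c j\<bar> else 0) + r / 2)"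
      using N \<open>r > 0\<close> by (intro order_trans[OF sum_abs] sum_mono) (auto simp: less_imp_le not_less)
    also have "\<dots> = (\<Sum>j\<in>{..<n} \<inter> {..<N}. \<bar>c j\<bar>) + r * real n / 2"
      by (simp add: sum.distrib sum.If_cases lessThan_def)
    also have "(\<Sum>j\<in>{..<n} \<inter> {..<N}. \<bar>c j\<bar>) \<le> C"
      unfolding C_def by (intro sum_mono2) auto
    finally show ?thesis
      by simp
  qed
  obtain K :: nat where K: "real K > 2 * C / r"
    using reals_Archimedean2 by blast
  have "\<bar>(\<Sum>j<n. c j) / real n\<bar> < r" if "n \<ge> max K 1" for n
  proof -
    have "2 * C < r * real K"
      using K \<open>r > 0\<close> by (simp add: field_simps)
    moreover have "r * real K \<le> r * real n"
      using that \<open>r > 0\<close> by simp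
    ultimately have "\<bar>\<Sum>j<n. c j\<bar> < r * real n"
      using sum_le[of n] by linarith
    with that show ?thesis
      by (simp add: field_simps)
  qed
  then show "\<exists>n0. \<forall>n\<ge>n0. norm ((\<Sum>j<n. c j) / real n - 0) < r"
    by (metis real_norm_def diff_zero)
qed

lemma greedy_sequence:
  fixes v :: "'i \<Rightarrow> 'a::real_normed_vector"
  assumes step: "\<And>k x N. \<exists>i\<in>avail N. norm (x + v i) \<le> max (norm x + c k) (G k)"
    and "incseq G" "G 0 \<ge> 0" "\<And>k. c k \<ge> 0"
  obtains s where "s 0 \<in> avail 0" "\<And>k. s (Suc k) \<in> avail (level (s k))"
    and "\<And>k. norm (\<Sum>j<k. v (s j)) \<le> G k + (\<Sum>j<k. c j)"
proof -
  \<comment> \<open>The state after step \<open>n\<close> is the chosen index together with the partial sum preceding it.\<close>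
  define P where "P n z \<longleftrightarrow> (n = 0 \<longrightarrow> fst z \<in> avail 0 \<and> snd z = 0) \<and>
      norm (snd z + v (fst z)) \<le> max (norm (snd z) + c n) (G n)" for n and z :: "'i \<times> 'a"
  define Q where "Q z z' \<longleftrightarrow> fst z' \<in> avail (level (fst z)) \<and> snd z' = snd z + v (fst z)"
    for z z' :: "'i \<times> 'a"
  have "\<exists>f. \<forall>n. P n (f n) \<and> Q (f n) (f (Suc n))"
  proof (rule dependent_nat_choice)
    show "\<exists>z. P 0 z"
      using step[where k=0 and x=0 and N=0] by (auto simp: P_def)
    show "\<exists>z'. P (Suc n) z' \<and> Q z z'" if "P n z" for n z
      using step[where k="Suc n" and x="snd z + v (fst z)" and N="level (fst z)"]
      by (auto simp: P_def Q_def)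
  qed
  then obtain f where f: "\<And>n. P n (f n)" "\<And>n. Q (f n) (f (Suc n))"
    by blast
  define s where "s k = fst (f k)" for k
  define A where "A k = snd (f k)" for k
  have A_Suc: "A (Suc k) = A k + v (s k)" for k
    using f(2)[of k] by (simp add: Q_def A_def s_def)
  have "A 0 = 0"
    using f(1)[of 0] by (simp add: P_def A_def)
  then have A_sum: "A k = (\<Sum>j<k. v (s j))" for k
    by (induction k) (simp_all add: A_Suc)
  have "norm (A k) \<le> G k + (\<Sum>j<k. c j)" for k
  proof (rule recursive_growth_bound)
    show "norm (A (Suc k)) \<le> max (norm (A k) + c k) (G k)" for k
      using f(1)[of k] unfolding A_Suc by (simp add: P_def A_def s_def)
  qed (use assms(2-4) \<open>A 0 = 0\<close> in auto)
  moreover have "s 0 \<in> avail 0" "s (Suc k) \<in> avail (level (s k))" for k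
    using f(1)[of 0] f(2)[of k] by (simp_all add: P_def Q_def s_def)
  ultimately show thesis
    using that by (simp add: A_sum)
qed

lemma averages_tendsto_zero_of_growth_bound:
  fixes S :: "nat \<Rightarrow> 'a::real_normed_vector"
  assumes growth: "\<And>k. norm (S k) \<le> G k + (\<Sum>j<k. c j)"
    and "(\<lambda>n. G n / real n) \<longlonglongrightarrow> 0" "c \<longlonglongrightarrow> 0"
  shows "(\<lambda>K. (1 / real (Suc K)) *\<^sub>R S (Suc K)) \<longlonglongrightarrow> 0"
proof (rule Lim_null_comparison[OF always_eventually])
  have "(\<lambda>n. G n / real n + (\<Sum>j<n. c j) / real n) \<longlonglongrightarrow> 0 + 0"
    using assms(2,3) by (intro tendsto_add cesaro_mean_tendsto_zero)
  then show "(\<lambda>K. G (Suc K) / real (Suc K) + (\<Sum>j<Suc K. c j) / real (Suc K)) \<longlonglongrightarrow> 0"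
    using LIMSEQ_Suc by fastforce
  show "\<forall>K. norm ((1 / real (Suc K)) *\<^sub>R S (Suc K))
      \<le> G (Suc K) / real (Suc K) + (\<Sum>j<Suc K. c j) / real (Suc K)"
  proof
    fix K
    have "norm ((1 / real (Suc K)) *\<^sub>R S (Suc K)) = norm (S (Suc K)) / real (Suc K)"
      by simp
    also have "\<dots> \<le> (G (Suc K) + (\<Sum>j<Suc K. c j)) / real (Suc K)"
      using growth[of "Suc K"] by (intro divide_right_mono) simp_all
    finally show "norm ((1 / real (Suc K)) *\<^sub>R S (Suc K))
        \<le> G (Suc K) / real (Suc K) + (\<Sum>j<Suc K. c j) / real (Suc K)"
      by (simp add: add_divide_distrib)
  qed
qed

lemma aus_slow_schedule:
  assumes aus: "asymptotically_uniformly_smooth TYPE('a::real_normed_vector)" and "B \<ge> 0"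
  obtains \<epsilon> \<tau> G :: "nat \<Rightarrow> real"
  where "\<And>k. \<epsilon> k > 0" "\<And>k. \<tau> k > 0" "\<And>k. smooth_at_scale TYPE('a) (\<epsilon> k) (\<tau> k)"
    and "\<And>k. (B + 1) / \<tau> k + B \<le> G k" "\<epsilon> \<longlonglongrightarrow> 0"
    and "incseq G" "G 0 \<ge> 0" "(\<lambda>n. G n / real n) \<longlonglongrightarrow> 0"
proof -
  obtain t where t: "\<And>\<epsilon>. \<epsilon> > 0 \<Longrightarrow> t \<epsilon> > 0"
    and smooth: "\<And>\<epsilon>. \<epsilon> > 0 \<Longrightarrow> smooth_at_scale TYPE('a) \<epsilon> (t \<epsilon>)"
    by (rule aus_smooth_scale_function[OF aus]) blast
  \<comment> \<open>The accuracy \<open>1 / (m k + 1)\<close> used at step \<open>k\<close> improves so slowly that the threshold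
    \<open>D (m k)\<close>, below which the smoothness estimate may fail, grows at most like \<open>\<surd>k\<close>.\<close>
  define D where "D j = (B + 1) / t (1 / (real j + 1)) + B" for j :: nat
  have "filterlim (\<lambda>k. sqrt (real k)) at_top sequentially"
    by real_asymp
  then obtain m where m: "filterlim m at_top sequentially"
    and D_m: "\<And>k. D (m k) \<le> max (D 0) (sqrt (real k))"
    using slowly_divergent_index by blast
  define \<epsilon> where "\<epsilon> k = 1 / (real (m k) + 1)" for k
  define G where "G k = D 0 + sqrt (real k)" for k :: nat
  have \<epsilon>_pos: "\<epsilon> k > 0" for k
    by (simp add: \<epsilon>_def)
  have "D 0 \<ge> 0"
    using t[of 1] \<open>B \<ge> 0\<close> by (simp add: D_def)
  have threshold: "(B + 1) / t (\<epsilon> k) + B \<le> G k" for k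
  proof -
    have "(B + 1) / t (\<epsilon> k) + B = D (m k)"
      by (simp add: D_def \<epsilon>_def)
    also have "\<dots> \<le> max (D 0) (sqrt (real k))"
      by (rule D_m)
    also have "\<dots> \<le> G k"
      using \<open>D 0 \<ge> 0\<close> by (simp add: G_def)
    finally show ?thesis .
  qed
  have "(\<lambda>j. 1 / (real j + 1)) \<longlonglongrightarrow> 0"
    by real_asymp
  then have \<epsilon>_lim: "\<epsilon> \<longlonglongrightarrow> 0"
    unfolding \<epsilon>_def[abs_def] using m by (rule filterlim_compose)
  have G: "incseq G" "G 0 \<ge> 0"
    using \<open>D 0 \<ge> 0\<close> by (simp_all add: G_def incseq_def)
  have G_lim: "(\<lambda>n. G n / real n) \<longlonglongrightarrow> 0"
    unfolding G_def by real_asymp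
  show thesis
    by (rule that[OF \<epsilon>_pos t[OF \<epsilon>_pos] smooth[OF \<epsilon>_pos] threshold \<epsilon>_lim G G_lim])
qed

lemma aus_greedy_step_bounds:
  fixes v :: "'i \<Rightarrow> 'a::real_normed_vector"
  assumes aus: "asymptotically_uniformly_smooth TYPE('a)"
    and bounded: "\<And>i. norm (v i) \<le> B"
    and weakly_null: "\<And>N. zero_in_weak_closure (v ` avail N)"
  obtains c G :: "nat \<Rightarrow> real"
  where "c \<longlonglongrightarrow> 0" "\<And>k. c k \<ge> 0" "incseq G" "G 0 \<ge> 0" "(\<lambda>n. G n / real n) \<longlonglongrightarrow> 0"
    and "\<And>k x N. \<exists>i\<in>avail N. norm (x + v i) \<le> max (norm x + c k) (G k)"
proof -
  have "B \<ge> 0"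
    using bounded[of undefined] norm_ge_zero[of "v undefined"] by linarith
  then obtain \<epsilon> \<tau> G where \<epsilon>: "\<And>k. \<epsilon> k > 0" and \<tau>: "\<And>k. \<tau> k > 0"
    and smooth: "\<And>k. smooth_at_scale TYPE('a) (\<epsilon> k) (\<tau> k)"
    and threshold: "\<And>k. (B + 1) / \<tau> k + B \<le> G k" and \<epsilon>_lim: "\<epsilon> \<longlonglongrightarrow> 0"
    and G: "incseq G" "G 0 \<ge> 0" "(\<lambda>n. G n / real n) \<longlonglongrightarrow> 0"
    by (rule aus_slow_schedule[OF aus]) blast
  define \<eta> where "\<eta> k = 1 / (real k + 1)" for k :: nat
  define c where "c k = \<epsilon> k * (B + 1) + \<eta> k" for k
  have step: "\<exists>i\<in>avail N. norm (x + v i) \<le> max (norm x + c k) (G k)" for k x N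
  proof -
    have \<eta>: "\<eta> k > 0" "\<eta> k \<le> 1"
      by (simp_all add: \<eta>_def)
    have bounded_N: "norm y \<le> B" if "y \<in> v ` avail N" for y
      using that bounded by blast
    obtain y where "y \<in> v ` avail N"
      and y: "norm (x + y) \<le> max (norm x + \<epsilon> k * (B + 1) + \<eta> k) ((B + 1) / \<tau> k + B)"
      using greedy_step[OF \<tau> less_imp_le[OF \<epsilon>] smooth weakly_null[of N] bounded_N \<eta>] by blast
    with threshold[of k] have "norm (x + y) \<le> max (norm x + c k) (G k)"
      by (simp add: c_def add.assoc)
    with \<open>y \<in> v ` avail N\<close> show ?thesis
      by blast
  qed
  have "\<eta> \<longlonglongrightarrow> 0"
    unfolding \<eta>_def[abs_def] by real_asymp
  with \<epsilon>_lim have "c \<longlonglongrightarrow> 0 * (B + 1) + 0"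
    unfolding c_def[abs_def] by (intro tendsto_intros)
  then have c_lim: "c \<longlonglongrightarrow> 0"
    by simp
  have c_nonneg: "c k \<ge> 0" for k
    using \<epsilon>[of k] \<open>B \<ge> 0\<close> by (simp add: c_def \<eta>_def)
  show thesis
    by (rule that[OF c_lim c_nonneg G step])
qed

lemma aus_greedy_null_averages:
  fixes v :: "'i \<Rightarrow> 'a::real_normed_vector"
  assumes "asymptotically_uniformly_smooth TYPE('a)"
    and "\<And>i. norm (v i) \<le> B"
    and "\<And>N. zero_in_weak_closure (v ` avail N)"
  obtains s where "s 0 \<in> avail 0" "\<And>k. s (Suc k) \<in> avail (level (s k))"
    and "(\<lambda>K. (1 / real (Suc K)) *\<^sub>R (\<Sum>k\<le>K. v (s k))) \<longlonglongrightarrow> 0"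
proof -
  obtain c G where c: "c \<longlonglongrightarrow> 0" "\<And>k. c k \<ge> 0" and G: "incseq G" "G 0 \<ge> 0" "(\<lambda>n. G n / real n) \<longlonglongrightarrow> 0"
    and step: "\<And>k x N. \<exists>i\<in>avail N. norm (x + v i) \<le> max (norm x + c k) (G k)"
    by (rule aus_greedy_step_bounds[where avail=avail, OF assms]) blast
  obtain s where s: "s 0 \<in> avail 0" "\<And>k. s (Suc k) \<in> avail (level (s k))"
    and growth: "\<And>k. norm (\<Sum>j<k. v (s j)) \<le> G k + (\<Sum>j<k. c j)"
    using greedy_sequence[where avail=avail and v=v and c=c and G=G and level=level, OF step G(1,2) c(2)]
    by blast
  have "(\<lambda>K. (1 / real (Suc K)) *\<^sub>R (\<Sum>j<Suc K. v (s j))) \<longlonglongrightarrow> 0"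
    using averages_tendsto_zero_of_growth_bound[OF growth G(3) c(1)] .
  with s show thesis
    using that by (simp add: lessThan_Suc_atMost)
qed

section \<open>The Banach-Saks properties\<close>

lemma sum_lessThan_double:
  fixes f :: "nat \<Rightarrow> 'a::comm_monoid_add"
  shows "(\<Sum>j<2 * K. f j) = (\<Sum>k<K. f (2 * k) + f (Suc (2 * k)))"
  by (induction K) (simp_all add: add.assoc)

lemma averages_tendsto_zero_of_pair_averages:
  fixes y :: "nat \<Rightarrow> 'a::real_normed_vector"
  assumes bounded: "\<And>j. norm (y j) \<le> M"
    and pairs: "(\<lambda>K. (1 / real (Suc K)) *\<^sub>R (\<Sum>j<2 * Suc K. y j)) \<longlonglongrightarrow> 0"
  shows "(\<lambda>n. (1 / real (Suc n)) *\<^sub>R (\<Sum>j\<le>n. y j)) \<longlonglongrightarrow> 0"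
proof (rule Lim_null_comparison[OF always_eventually])
  define P where "P K = (1 / real (Suc K)) *\<^sub>R (\<Sum>j<2 * Suc K. y j)" for K
  have "(\<lambda>n. norm (P (n div 2))) \<longlonglongrightarrow> 0"
    unfolding P_def
    by (intro tendsto_norm_zero filterlim_compose[OF pairs] filterlim_at_top_div_const_nat) simp
  moreover have "(\<lambda>n. M / real (Suc n)) \<longlonglongrightarrow> 0"
    by real_asymp
  ultimately show "(\<lambda>n. norm (P (n div 2)) + M / real (Suc n)) \<longlonglongrightarrow> 0"
    using tendsto_add by fastforce
  show "\<forall>n. norm ((1 / real (Suc n)) *\<^sub>R (\<Sum>j\<le>n. y j)) \<le> norm (P (n div 2)) + M / real (Suc n)"
  proof
    fix n :: nat
    define K where "K = n div 2"
    have split: "(\<Sum>j\<le>n. y j) = (\<Sum>j<2 * Suc K. y j) - (if even n then y (Suc n) else 0)"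
      by (cases "even n") (auto simp: K_def lessThan_Suc_atMost[symmetric] elim!: evenE oddE)
    have "norm (if even n then y (Suc n) else 0) \<le> M"
      using bounded[of "Suc n"] order_trans[OF norm_ge_zero bounded[of 0]] by auto
    then have "norm (\<Sum>j\<le>n. y j) \<le> norm (\<Sum>j<2 * Suc K. y j) + M"
      unfolding split
      using norm_triangle_ineq4[of "\<Sum>j<2 * Suc K. y j" "if even n then y (Suc n) else 0"]
      by linarith
    have "norm ((1 / real (Suc n)) *\<^sub>R (\<Sum>j\<le>n. y j)) = norm (\<Sum>j\<le>n. y j) / real (Suc n)"
      by simp
    also have "\<dots> \<le> (norm (\<Sum>j<2 * Suc K. y j) + M) / real (Suc n)"
      using \<open>norm (\<Sum>j\<le>n. y j) \<le> _\<close> by (rule divide_right_mono) simp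
    also have "\<dots> = norm (\<Sum>j<2 * Suc K. y j) / real (Suc n) + M / real (Suc n)"
      by (rule add_divide_distrib)
    also have "norm (\<Sum>j<2 * Suc K. y j) / real (Suc n) \<le> norm (P K)"
      unfolding P_def by (simp add: K_def divide_left_mono)
    finally show "norm ((1 / real (Suc n)) *\<^sub>R (\<Sum>j\<le>n. y j)) \<le> norm (P (n div 2)) + M / real (Suc n)"
      by (simp add: K_def)
  qed
qed

lemma weakly_null_differences:
  assumes "weak_cluster_point x \<phi>"
  shows "zero_in_weak_closure ((\<lambda>p. x (fst p) - x (snd p)) ` {p. N < fst p \<and> fst p < snd p})"
  unfolding zero_in_weak_closure_def
proof (intro allI impI)
  fix F :: "('a \<Rightarrow>\<^sub>L real) set" and \<eta> :: real
  assume "finite F" "\<eta> > 0"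
  then have "frequently (\<lambda>n. \<forall>f\<in>F. \<bar>blinfun_apply f (x n) - \<phi> f\<bar> < \<eta> / 2) sequentially"
    using assms half_gt_zero unfolding weak_cluster_point_def by blast
  then have near: "\<exists>n\<ge>Suc N'. \<forall>f\<in>F. \<bar>blinfun_apply f (x n) - \<phi> f\<bar> < \<eta> / 2" for N'
    unfolding frequently_sequentially by blast
  obtain a where "N < a" and a: "\<forall>f\<in>F. \<bar>blinfun_apply f (x a) - \<phi> f\<bar> < \<eta> / 2"
    using near[of N] Suc_le_eq by blast
  obtain b where "a < b" and b: "\<forall>f\<in>F. \<bar>blinfun_apply f (x b) - \<phi> f\<bar> < \<eta> / 2"
    using near[of a] Suc_le_eq by blast
  have "\<bar>blinfun_apply f (x a - x b)\<bar> < \<eta>" if "f \<in> F" for f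
  proof -
    have "\<bar>blinfun_apply f (x a) - \<phi> f\<bar> < \<eta> / 2" "\<bar>blinfun_apply f (x b) - \<phi> f\<bar> < \<eta> / 2"
      using a b that by blast+
    then show ?thesis
      unfolding blinfun.diff_right abs_less_iff by simp
  qed
  with \<open>N < a\<close> \<open>a < b\<close> show "\<exists>y\<in>(\<lambda>p. x (fst p) - x (snd p)) ` {p. N < fst p \<and> fst p < snd p}.
      \<forall>f\<in>F. \<bar>blinfun_apply f y\<bar> < \<eta>"
    by (intro bexI[of _ "x a - x b"] image_eqI[of _ _ "(a, b)"]) auto
qed

lemma weakly_null_shifts:
  assumes "weak_cluster_point x \<phi>" and x0: "\<And>f. \<phi> f = blinfun_apply f x0"
  shows "zero_in_weak_closure ((\<lambda>n. x n - x0) ` {N<..})"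
  unfolding zero_in_weak_closure_def
proof (intro allI impI)
  fix F :: "('a \<Rightarrow>\<^sub>L real) set" and \<eta> :: real
  assume "finite F" "\<eta> > 0"
  then obtain n where "n \<ge> Suc N" and n: "\<forall>f\<in>F. \<bar>blinfun_apply f (x n) - \<phi> f\<bar> < \<eta>"
    using assms(1) unfolding weak_cluster_point_def frequently_sequentially by blast
  then have "\<forall>f\<in>F. \<bar>blinfun_apply f (x n - x0)\<bar> < \<eta>"
    by (simp add: x0 blinfun.diff_right)
  with \<open>n \<ge> Suc N\<close> show "\<exists>y\<in>(\<lambda>n. x n - x0) ` {N<..}. \<forall>f\<in>F. \<bar>blinfun_apply f y\<bar> < \<eta>"
    by force
qed

lemma alternating_averages_of_pairs:
  fixes x :: "nat \<Rightarrow> 'a::real_normed_vector" and a b :: "nat \<Rightarrow> nat"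
  assumes M: "\<And>n. norm (x n) \<le> M" and "\<And>k. a k < b k" "\<And>k. b k < a (Suc k)"
    and lim: "(\<lambda>K. (1 / real (Suc K)) *\<^sub>R (\<Sum>k\<le>K. x (a k) - x (b k))) \<longlonglongrightarrow> 0"
  shows "\<exists>r \<epsilon>. strict_mono r \<and> (\<forall>j. \<epsilon> j \<in> {-1, 1::real}) \<and>
           convergent (\<lambda>k. (1 / real (Suc k)) *\<^sub>R (\<Sum>j\<le>k. \<epsilon> j *\<^sub>R x (r j)))"
proof (intro exI conjI)
  define r where "r j = (if even j then a (j div 2) else b (j div 2))" for j
  define \<sigma> where "\<sigma> j = (if even j then 1 else - 1 :: real)" for j :: nat
  have "r j < r (Suc j)" for j
    using assms(2,3) by (cases "even j") (auto simp: r_def elim!: evenE oddE)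
  then show "strict_mono r"
    by (simp add: strict_mono_Suc_iff)
  show "\<forall>j. \<sigma> j \<in> {-1, 1}"
    by (simp add: \<sigma>_def)
  have "(\<lambda>n. (1 / real (Suc n)) *\<^sub>R (\<Sum>j\<le>n. \<sigma> j *\<^sub>R x (r j))) \<longlonglongrightarrow> 0"
  proof (rule averages_tendsto_zero_of_pair_averages)
    show "norm (\<sigma> j *\<^sub>R x (r j)) \<le> M" for j
      using M[of "r j"] by (simp add: \<sigma>_def)
    have "(\<Sum>j<2 * Suc K. \<sigma> j *\<^sub>R x (r j)) = (\<Sum>k\<le>K. x (a k) - x (b k))" for K
      unfolding sum_lessThan_double lessThan_Suc_atMost[symmetric]
      by (simp add: \<sigma>_def r_def)
    then show "(\<lambda>K. (1 / real (Suc K)) *\<^sub>R (\<Sum>j<2 * Suc K. \<sigma> j *\<^sub>R x (r j))) \<longlonglongrightarrow> 0"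
      using lim by simp
  qed
  then show "convergent (\<lambda>k. (1 / real (Suc k)) *\<^sub>R (\<Sum>j\<le>k. \<sigma> j *\<^sub>R x (r j)))"
    by (rule convergentI)
qed

theorem aus_imp_alternating_banach_saks:
  assumes aus: "asymptotically_uniformly_smooth TYPE('a::real_normed_vector)"
  shows "alternating_banach_saks TYPE('a)"
  unfolding alternating_banach_saks_def
proof (intro allI impI)
  fix x :: "nat \<Rightarrow> 'a" assume "bounded (range x)"
  then obtain M where M: "\<And>n. norm (x n) \<le> M"
    unfolding bounded_iff by auto
  obtain \<phi> where "weak_cluster_point x \<phi>"
    using bounded_sequence_weak_cluster_point[of x M] M by blast
  define v where "v p = x (fst p) - x (snd p)" for p
  have "norm (v p) \<le> 2 * M" for p
    using norm_triangle_ineq4[of "x (fst p)" "x (snd p)"] M[of "fst p"] M[of "snd p"]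
    by (simp add: v_def)
  then obtain s where s0: "s 0 \<in> {p. 0 < fst p \<and> fst p < snd p}"
    and s_Suc: "\<And>k. s (Suc k) \<in> {p. snd (s k) < fst p \<and> fst p < snd p}"
    and s_lim: "(\<lambda>K. (1 / real (Suc K)) *\<^sub>R (\<Sum>k\<le>K. v (s k))) \<longlonglongrightarrow> 0"
    using aus_greedy_null_averages[OF aus, of v "2 * M" "\<lambda>N. {p. N < fst p \<and> fst p < snd p}" snd]
      weakly_null_differences[OF \<open>weak_cluster_point x \<phi>\<close>] unfolding v_def by blast
  have "fst (s k) < snd (s k)" for k
    using s0 s_Suc[of "k - 1"] by (cases k) auto
  moreover have "snd (s k) < fst (s (Suc k))" for k
    using s_Suc[of k] by auto
  ultimately show "\<exists>r \<epsilon>. strict_mono r \<and> (\<forall>j. \<epsilon> j \<in> {-1, 1::real}) \<and>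
      convergent (\<lambda>k. (1 / real (Suc k)) *\<^sub>R (\<Sum>j\<le>k. \<epsilon> j *\<^sub>R x (r j)))"
    using alternating_averages_of_pairs[OF M, of "\<lambda>k. fst (s k)" "\<lambda>k. snd (s k)"] s_lim
    by (simp add: v_def)
qed

theorem aus_reflexive_imp_banach_saks:
  assumes aus: "asymptotically_uniformly_smooth TYPE('a::real_normed_vector)"
    and reflexive: "reflexive_space TYPE('a)"
  shows "banach_saks TYPE('a)"
  unfolding banach_saks_def
proof (intro allI impI)
  fix x :: "nat \<Rightarrow> 'a" assume "bounded (range x)"
  then obtain M where M: "\<And>n. norm (x n) \<le> M"
    unfolding bounded_iff by auto
  obtain \<phi> where "\<And>f. \<bar>\<phi> f\<bar> \<le> norm f * M" and cluster: "weak_cluster_point x \<phi>"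
    using bounded_sequence_weak_cluster_point[of x M] M by blast
  then have "bounded_linear \<phi>"
    by (rule weak_cluster_point_bounded_linear)
  then obtain x0 where x0: "\<And>f. \<phi> f = blinfun_apply f x0"
    using reflexive bounded_linear_Blinfun_apply unfolding reflexive_space_def by metis
  have "norm (x n - x0) \<le> M + norm x0" for n
    using norm_triangle_ineq4[of "x n" x0] M[of n] by simp
  then obtain s where s_Suc: "\<And>k. s (Suc k) \<in> {s k<..}"
    and s_lim: "(\<lambda>K. (1 / real (Suc K)) *\<^sub>R (\<Sum>k\<le>K. x (s k) - x0)) \<longlonglongrightarrow> 0"
    using aus_greedy_null_averages[OF aus, of "\<lambda>n. x n - x0" "M + norm x0" "\<lambda>N. {N<..}" "\<lambda>n. n"]
      weakly_null_shifts[OF cluster x0] by blast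
  have mean_eq: "(1 / real (Suc K)) *\<^sub>R (\<Sum>k\<le>K. x (s k))
      = (1 / real (Suc K)) *\<^sub>R (\<Sum>k\<le>K. x (s k) - x0) + x0" for K
    by (simp add: sum_subtractf scaleR_diff_right sum_constant_scaleR del: of_nat_Suc)
  have "(\<lambda>K. (1 / real (Suc K)) *\<^sub>R (\<Sum>k\<le>K. x (s k))) \<longlonglongrightarrow> 0 + x0"
    unfolding mean_eq using s_lim by (rule tendsto_add) simp
  moreover have "strict_mono s"
    using s_Suc by (simp add: strict_mono_Suc_iff)
  ultimately show "\<exists>r. strict_mono r \<and> convergent (\<lambda>k. (1 / real (Suc k)) *\<^sub>R (\<Sum>j\<le>k. x (r j)))"
    unfolding convergent_def by blast
qed

theorem corollary3p2:
  assumes "asymptotically_uniformly_smooth TYPE('a::banach)"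
  shows "alternating_banach_saks TYPE('a)
         \<and> (reflexive_space TYPE('a) \<longrightarrow> banach_saks TYPE('a))"
  using aus_imp_alternating_banach_saks[OF assms] aus_reflexive_imp_banach_saks[OF assms] by blast

end
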